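(* Consider the game among $N$ domains $i = 1,\dots,N$ in which domain $i$ chooses quality $q_i \in [0,1]$ and generality $g_i \in [0,1]$ and receives payoff \[ \pi_i = \alpha_i q_i (1 + \beta g_i) + \lambda \sum_{j \neq i} q_j g_j - \Big(\tfrac{\gamma_q}{2} q_i^2 + \tfrac{\gamma_g}{2} g_i^2 q_i + \kappa g_i\Big), \] with parameters $\alpha_i > 0$, $\beta \ge 0$, $\lambda > 0$, $\gamma_q, \gamma_g > 0$, $\kappa \ge 0$. Let $(q_i^*, g_i^{NE})_{i=1}^N$ be a Nash equilibrium with $q_i^* > 0$ for all $i$. If $\alpha_i \beta < \kappa / q_i^*$ for all domains $i$, then $g_i^{NE} = 0$ for all $i$.
   Context: The model describes an organization with $N$ domain teams producing data products; $q_i$ is the quality and $g_i$ the cross-domain generality of domain $i$'s product. The situation $g_i^{NE}=0$ for all $i$ is called the "data mesh trap". *)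

theory Defs
  imports Complex_Main
begin

text \<open>Domains are indexed by i < N (i.e. 0..N-1). q i = quality, g i = generality.\<close>

definition payoff ::
  "(nat \<Rightarrow> real) \<Rightarrow> real \<Rightarrow> real \<Rightarrow> real \<Rightarrow> real \<Rightarrow> real \<Rightarrow> nat
   \<Rightarrow> (nat \<Rightarrow> real) \<Rightarrow> (nat \<Rightarrow> real) \<Rightarrow> nat \<Rightarrow> real" where
  "payoff \<alpha> \<beta> lam \<gamma>q \<gamma>g \<kappa> N q g i =
     \<alpha> i * q i * (1 + \<beta> * g i) + lam * (\<Sum>j\<in>{..<N} - {i}. q j * g j)
     - (\<gamma>q / 2 * (q i)\<^sup>2 + \<gamma>g / 2 * (g i)\<^sup>2 * q i + \<kappa> * g i)"

definition nash_eq ::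
  "(nat \<Rightarrow> real) \<Rightarrow> real \<Rightarrow> real \<Rightarrow> real \<Rightarrow> real \<Rightarrow> real \<Rightarrow> nat
   \<Rightarrow> (nat \<Rightarrow> real) \<Rightarrow> (nat \<Rightarrow> real) \<Rightarrow> bool" where
  "nash_eq \<alpha> \<beta> lam \<gamma>q \<gamma>g \<kappa> N q g \<longleftrightarrow>
     (\<forall>i<N. q i \<in> {0..1} \<and> g i \<in> {0..1}) \<and>
     (\<forall>i<N. \<forall>x\<in>{0..1}. \<forall>y\<in>{0..1}.
        payoff \<alpha> \<beta> lam \<gamma>q \<gamma>g \<kappa> N (q(i := x)) (g(i := y)) i
          \<le> payoff \<alpha> \<beta> lam \<gamma>q \<gamma>g \<kappa> N q g i)"

end

theory Submission
  imports Defs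
begin

text \<open>Lowering its own generality g_i changes domain i's payoff only through the private
  terms: the spillover lam * sum q_j g_j involves the other domains only. As a function of
  g_i the payoff is concave with slope alpha_i beta q_i - kappa at 0, so when
  alpha_i beta q_i < kappa (equivalently alpha_i beta < kappa / q_i) every g_i > 0 is
  strictly beaten by g_i = 0, and a Nash equilibrium must have g_i = 0.\<close>

lemma payoff_update_own_generality:
  "payoff \<alpha> \<beta> lam \<gamma>q \<gamma>g \<kappa> N q (g(i := y)) i
     = payoff \<alpha> \<beta> lam \<gamma>q \<gamma>g \<kappa> N q g i
       + (\<alpha> i * \<beta> * q i - \<kappa>) * (y - g i) - \<gamma>g / 2 * q i * (y\<^sup>2 - (g i)\<^sup>2)"
proof -
  have "(\<Sum>j\<in>{..<N} - {i}. q j * (g(i := y)) j) = (\<Sum>j\<in>{..<N} - {i}. q j * g j)"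
    by (rule sum.cong) auto
  then show ?thesis
    unfolding payoff_def by (simp add: algebra_simps)
qed

lemma payoff_less_zero_generality:
  assumes "0 < g i" and "\<alpha> i * \<beta> * q i < \<kappa>" and "0 \<le> \<gamma>g" and "0 \<le> q i"
  shows "payoff \<alpha> \<beta> lam \<gamma>q \<gamma>g \<kappa> N q g i < payoff \<alpha> \<beta> lam \<gamma>q \<gamma>g \<kappa> N q (g(i := 0)) i"
proof -
  have "0 < (\<alpha> i * \<beta> * q i - \<kappa>) * (0 - g i)"
    using assms(1,2) by (simp add: mult_neg_pos)
  moreover have "0 \<le> \<gamma>g / 2 * q i * (g i)\<^sup>2"
    using assms(3,4) by simp
  ultimately show ?thesis
    unfolding payoff_update_own_generality[where y = 0] by simp
qed

lemma nash_eq_generality_deviation: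
  assumes "nash_eq \<alpha> \<beta> lam \<gamma>q \<gamma>g \<kappa> N q g" and "i < N" and "y \<in> {0..1}"
  shows "payoff \<alpha> \<beta> lam \<gamma>q \<gamma>g \<kappa> N q (g(i := y)) i \<le> payoff \<alpha> \<beta> lam \<gamma>q \<gamma>g \<kappa> N q g i"
proof -
  have "q i \<in> {0..1}"
    using assms(1,2) unfolding nash_eq_def by blast
  with assms show ?thesis
    unfolding nash_eq_def by (metis fun_upd_triv)
qed

theorem corollary1:
  fixes \<alpha> :: "nat \<Rightarrow> real" and \<beta> lam \<gamma>q \<gamma>g \<kappa> :: real and N :: nat
    and q g :: "nat \<Rightarrow> real"
  assumes "\<forall>i<N. \<alpha> i > 0" and "\<beta> \<ge> 0" and "lam > 0"
    and "\<gamma>q > 0" and "\<gamma>g > 0" and "\<kappa> \<ge> 0"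
    and "nash_eq \<alpha> \<beta> lam \<gamma>q \<gamma>g \<kappa> N q g"
    and "\<forall>i<N. q i > 0"
    and "\<forall>i<N. \<alpha> i * \<beta> < \<kappa> / q i"
  shows "\<forall>i<N. g i = 0"
proof (intro allI impI)
  fix i assume "i < N"
  then have q_pos: "0 < q i" and "0 \<le> g i"
    using assms(7,8) unfolding nash_eq_def by auto
  have below_cost: "\<alpha> i * \<beta> * q i < \<kappa>"
    using assms(9) \<open>i < N\<close> q_pos by (simp add: less_divide_eq)
  show "g i = 0"
  proof (rule ccontr)
    assume "g i \<noteq> 0"
    with \<open>0 \<le> g i\<close> have "0 < g i" by simp
    then have "payoff \<alpha> \<beta> lam \<gamma>q \<gamma>g \<kappa> N q g i < payoff \<alpha> \<beta> lam \<gamma>q \<gamma>g \<kappa> N q (g(i := 0)) i"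
      using payoff_less_zero_generality below_cost assms(5) q_pos by simp
    moreover have "payoff \<alpha> \<beta> lam \<gamma>q \<gamma>g \<kappa> N q (g(i := 0)) i \<le> payoff \<alpha> \<beta> lam \<gamma>q \<gamma>g \<kappa> N q g i"
      using nash_eq_generality_deviation[OF assms(7) \<open>i < N\<close>] by simp
    ultimately show False by simp
  qed
qed

end
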